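(* Let $G$ be a connected graph, let $u\in V(G)$ with set of neighbours $N_G(u)=\{p_1,\dots,p_n\}$, $n\ge 2$, where $u$ is joined to $p_i$ by $a_i\ge 1$ edges for each $i$. If $u$ is not a cut vertex, then with $H=G-u$, $$t(G)=\Big(\sum_{i=1}^n a_i\Big)t(H)+\sum_{\substack{S\subset N_G(u)\\ |S|\ge 2}}\Big(\prod_{i\in I_S}a_i\Big)t(H_S),$$ where $I_S$ is the set of indices of the vertices in $S$ and $H_S$ is the graph obtained from $H$ by identifying all vertices of $S$ into one vertex.
   Context: Graphs are finite and may have multiple edges and loops; $t(H)$ is the number of spanning trees of $H$. $G-u$ is the graph obtained from $G$ by deleting the vertex $u$ together with all edges incident to it. A cut vertex is a vertex whose deletion disconnects the graph. *)

theory Defs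
  imports Main
begin

text \<open>Finite multigraphs with possible loops: each edge has a set of ends of size 1 (loop) or 2.\<close>

record ('a, 'e) mgraph =
  verts :: "'a set"
  edges :: "'e set"
  ends  :: "'e \<Rightarrow> 'a set"

definition wf_mgraph :: "('a, 'e) mgraph \<Rightarrow> bool" where
  "wf_mgraph G \<longleftrightarrow> finite (verts G) \<and> finite (edges G) \<and>
     (\<forall>e \<in> edges G. ends G e \<subseteq> verts G \<and> 1 \<le> card (ends G e) \<and> card (ends G e) \<le> 2)"

definition adj_rel :: "('a, 'e) mgraph \<Rightarrow> 'e set \<Rightarrow> ('a \<times> 'a) set" where
  "adj_rel G F = {(x, y). \<exists>e \<in> F. ends G e = {x, y}}"

definition connected_on :: "('a, 'e) mgraph \<Rightarrow> 'a set \<Rightarrow> 'e set \<Rightarrow> bool" where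
  "connected_on G V F \<longleftrightarrow> V \<noteq> {} \<and> (\<forall>x \<in> V. \<forall>y \<in> V. (x, y) \<in> (adj_rel G F)\<^sup>*)"

definition connected :: "('a, 'e) mgraph \<Rightarrow> bool" where
  "connected G \<longleftrightarrow> connected_on G (verts G) (edges G)"

text \<open>Acyclic edge set: no edge lies on a cycle, i.e. every edge is a non-loop
  whose endpoints are not joined by a walk avoiding it.\<close>
definition acyclic_edges :: "('a, 'e) mgraph \<Rightarrow> 'e set \<Rightarrow> bool" where
  "acyclic_edges G F \<longleftrightarrow> (\<forall>e \<in> F. \<exists>x y. x \<noteq> y \<and> ends G e = {x, y} \<and>
       (x, y) \<notin> (adj_rel G (F - {e}))\<^sup>*)"

definition spanning_tree :: "('a, 'e) mgraph \<Rightarrow> 'e set \<Rightarrow> bool" where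
  "spanning_tree G T \<longleftrightarrow> T \<subseteq> edges G \<and> connected_on G (verts G) T \<and> acyclic_edges G T"

definition num_spanning_trees :: "('a, 'e) mgraph \<Rightarrow> nat" where
  "num_spanning_trees G = card {T. spanning_tree G T}"

definition delete_vertex :: "('a, 'e) mgraph \<Rightarrow> 'a \<Rightarrow> ('a, 'e) mgraph" where
  "delete_vertex G u = \<lparr>verts = verts G - {u}, edges = {e \<in> edges G. u \<notin> ends G e}, ends = ends G\<rparr>"

definition cut_vertex :: "('a, 'e) mgraph \<Rightarrow> 'a \<Rightarrow> bool" where
  "cut_vertex G u \<longleftrightarrow> u \<in> verts G \<and> connected G \<and> \<not> connected (delete_vertex G u)"

text \<open>Identify all vertices of S into one vertex (represented by a chosen element of S).
  Edges are kept; edges inside S become loops.\<close>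
definition identify :: "('a, 'e) mgraph \<Rightarrow> 'a set \<Rightarrow> ('a, 'e) mgraph" where
  "identify G S = (let s = (SOME x. x \<in> S); f = (\<lambda>v. if v \<in> S then s else v) in
     \<lparr>verts = f ` verts G, edges = edges G, ends = (\<lambda>e. f ` ends G e)\<rparr>)"

definition neighbours :: "('a, 'e) mgraph \<Rightarrow> 'a \<Rightarrow> 'a set" where
  "neighbours G u = {p. p \<noteq> u \<and> (\<exists>e \<in> edges G. ends G e = {u, p})}"

definition mult :: "('a, 'e) mgraph \<Rightarrow> 'a \<Rightarrow> 'a \<Rightarrow> nat" where
  "mult G u p = card {e \<in> edges G. ends G e = {u, p}}"

end

theory Submission
  imports Defs "HOL-Library.FuncSet"
begin

(* Sort the spanning trees T of G by the set S of neighbours p of u for which T contains a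
   u-p edge. Deleting u and identifying S to one vertex turns the remaining edges of T into a
   spanning tree of H_S; conversely, a spanning tree of H_S together with one u-p edge for each
   p in S is a spanning tree of G with this set S. So the class of S has
   (prod_{p in S} a_p) t(H_S) elements, and the singletons S = {p}, for which H_S = H,
   contribute (sum_p a_p) t(H). *)

lemma rtrancl_map:
  assumes step: "\<And>a b. (a, b) \<in> R \<Longrightarrow> (h a, h b) \<in> Q\<^sup>*" and "(x, y) \<in> R\<^sup>*"
  shows "(h x, h y) \<in> Q\<^sup>*"
  using \<open>(x, y) \<in> R\<^sup>*\<close> by induction (auto dest: step intro: rtrancl_trans)

lemma rtrancl_lift:
  assumes fibre: "\<And>x y. h x = h y \<Longrightarrow> (x, y) \<in> Q\<^sup>*"
    and step: "\<And>a b. (a, b) \<in> R \<Longrightarrow> \<exists>x y. h x = a \<and> h y = b \<and> (x, y) \<in> Q\<^sup>*"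
    and "(h x, h y) \<in> R\<^sup>*"
  shows "(x, y) \<in> Q\<^sup>*"
proof -
  have "\<forall>x y. h x = a \<longrightarrow> h y = b \<longrightarrow> (x, y) \<in> Q\<^sup>*" if "(a, b) \<in> R\<^sup>*" for a b
    using that
  proof induction
    case base
    then show ?case using fibre by blast
  next
    case (step b c)
    then obtain y' z' where "h y' = b" "h z' = c" "(y', z') \<in> Q\<^sup>*"
      using assms(2) by blast
    show ?case
    proof (intro allI impI)
      fix x z assume "h x = a" "h z = c"
      then have "(x, y') \<in> Q\<^sup>*" "(z', z) \<in> Q\<^sup>*"
        using step.IH \<open>h y' = b\<close> \<open>h z' = c\<close> fibre by auto
      with \<open>(y', z') \<in> Q\<^sup>*\<close> show "(x, z) \<in> Q\<^sup>*" by (meson rtrancl_trans)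
    qed
  qed
  with assms(3) show ?thesis by blast
qed

lemma adj_relI: "e \<in> F \<Longrightarrow> ends G e = {x, y} \<Longrightarrow> (x, y) \<in> adj_rel G F"
  by (auto simp: adj_rel_def)

lemma adj_rel_mono: "F \<subseteq> F' \<Longrightarrow> adj_rel G F \<subseteq> adj_rel G F'"
  by (auto simp: adj_rel_def)

lemma rtrancl_adj_rel_mono: "F \<subseteq> F' \<Longrightarrow> (adj_rel G F)\<^sup>* \<subseteq> (adj_rel G F')\<^sup>*"
  by (rule rtrancl_mono[OF adj_rel_mono])

lemma sym_adj_rel: "sym (adj_rel G F)"
  by (auto simp: adj_rel_def sym_def insert_commute)

lemma rtrancl_adj_rel_sym: "(x, y) \<in> (adj_rel G F)\<^sup>* \<Longrightarrow> (y, x) \<in> (adj_rel G F)\<^sup>*"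
  by (rule symD[OF sym_rtrancl[OF sym_adj_rel]])

lemma adj_rel_insert:
  "ends G e = {x, y} \<Longrightarrow> adj_rel G (insert e F) = insert (x, y) (insert (y, x) (adj_rel G F))"
  by (auto simp: adj_rel_def doubleton_eq_iff)

lemma wf_mgraph_ends:
  assumes "wf_mgraph G" "e \<in> edges G"
  shows "ends G e \<subseteq> verts G" and "\<exists>x y. ends G e = {x, y}"
proof -
  show "ends G e \<subseteq> verts G" using assms unfolding wf_mgraph_def by blast
  have "1 \<le> card (ends G e)" "card (ends G e) \<le> 2" using assms unfolding wf_mgraph_def by blast+
  then consider "card (ends G e) = 1" | "card (ends G e) = 2" by linarith
  then show "\<exists>x y. ends G e = {x, y}"
  proof cases
    case 1
    then obtain x where "ends G e = {x}" by (auto simp: card_1_singleton_iff)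
    then show ?thesis by blast
  next
    case 2
    then show ?thesis by (auto simp: card_2_iff)
  qed
qed

lemma acyclic_edgesD:
  assumes "acyclic_edges G F" "e \<in> F" "ends G e = {x, y}"
  shows "x \<noteq> y" and "(x, y) \<notin> (adj_rel G (F - {e}))\<^sup>*"
proof -
  obtain x' y' where "x' \<noteq> y'" "{x, y} = {x', y'}" "(x', y') \<notin> (adj_rel G (F - {e}))\<^sup>*"
    using assms unfolding acyclic_edges_def by auto
  then show "x \<noteq> y" and "(x, y) \<notin> (adj_rel G (F - {e}))\<^sup>*"
    by (metis doubleton_eq_iff rtrancl_adj_rel_sym)+
qed

lemma acyclic_edges_inj_on: "acyclic_edges G F \<Longrightarrow> inj_on (ends G) F"
proof (rule inj_onI, rule ccontr)
  fix e1 e2 assume acyc: "acyclic_edges G F" and e: "e1 \<in> F" "e2 \<in> F" "ends G e1 = ends G e2" "e1 \<noteq> e2"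
  obtain x y where xy: "ends G e1 = {x, y}" using acyc e(1) unfolding acyclic_edges_def by blast
  then have "(x, y) \<in> adj_rel G (F - {e1})" using e by (intro adj_relI[of e2]) auto
  with acyclic_edgesD(2)[OF acyc e(1) xy] show False by blast
qed

definition tree_neighbours :: "('a, 'e) mgraph \<Rightarrow> 'a \<Rightarrow> 'e set \<Rightarrow> 'a set" where
  "tree_neighbours G u T = {p \<in> neighbours G u. \<exists>e \<in> T. ends G e = {u, p}}"

locale neighbour_identification =
  fixes G :: "('a, 'e) mgraph" and u :: 'a and S :: "'a set"
  assumes wf: "wf_mgraph G" and u_vert: "u \<in> verts G"
    and S_neighbours: "S \<subseteq> neighbours G u" and S_nonempty: "S \<noteq> {}"
begin

abbreviation HS :: "('a, 'e) mgraph" where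
  "HS \<equiv> identify (delete_vertex G u) S"

definition rep :: 'a where
  "rep = (SOME x. x \<in> S)"

text \<open>The vertex \<open>u\<close> is sent to the representative of \<open>S\<close> as well, so that tree edges from
  \<open>u\<close> into \<open>S\<close> become trivial steps and walks in \<open>G\<close> project to walks in \<open>HS\<close>.\<close>

definition proj :: "'a \<Rightarrow> 'a" where
  "proj v = (if v \<in> insert u S then rep else v)"

lemma rep_in_S: "rep \<in> S"
  unfolding rep_def using S_nonempty by (simp add: some_in_eq)

lemma S_verts: "S \<subseteq> verts G - {u}"
  using S_neighbours wf_mgraph_ends(1)[OF wf] unfolding neighbours_def by blast

lemma u_notin_S: "u \<notin> S"
  using S_verts by blast

lemma proj_u [simp]: "proj u = rep"
  and proj_S: "p \<in> S \<Longrightarrow> proj p = rep"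
  by (auto simp: proj_def)

lemma HS_simps:
  "verts HS = proj ` (verts G - {u})"
  "edges HS = {e \<in> edges G. u \<notin> ends G e}"
  "e \<in> edges HS \<Longrightarrow> ends HS e = proj ` ends G e"
proof -
  define c where "c v = (if v \<in> S then rep else v)" for v
  have HS: "HS = \<lparr>verts = c ` (verts G - {u}), edges = {e \<in> edges G. u \<notin> ends G e},
      ends = (\<lambda>e. c ` ends G e)\<rparr>"
    unfolding identify_def delete_vertex_def Let_def c_def rep_def by simp
  have c_proj: "c ` V = proj ` V" if "u \<notin> V" for V
    using that by (auto simp: c_def proj_def intro!: image_cong)
  show "verts HS = proj ` (verts G - {u})" "edges HS = {e \<in> edges G. u \<notin> ends G e}"
    using c_proj[of "verts G - {u}"] by (simp_all add: HS)
  show "e \<in> edges HS \<Longrightarrow> ends HS e = proj ` ends G e"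
    using c_proj[of "ends G e"] by (simp add: HS)
qed

lemma proj_verts: "v \<in> verts G \<Longrightarrow> proj v \<in> verts HS"
proof (cases "v = u")
  case True
  have "proj rep \<in> verts HS" using S_verts rep_in_S by (auto simp: HS_simps)
  then show ?thesis using True rep_in_S by (simp add: proj_S)
qed (auto simp: HS_simps)

lemma rtrancl_adj_rel_proj:
  assumes "T \<subseteq> edges G"
    and u_edges: "\<And>e. e \<in> T \<Longrightarrow> u \<in> ends G e \<Longrightarrow> \<exists>p \<in> S. ends G e = {u, p}"
    and "(x, y) \<in> (adj_rel G T)\<^sup>*"
  shows "(proj x, proj y) \<in> (adj_rel HS (T \<inter> edges HS))\<^sup>*"
proof (rule rtrancl_map[OF _ assms(3)])
  fix a b assume "(a, b) \<in> adj_rel G T"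
  then obtain e where e: "e \<in> T" "ends G e = {a, b}" by (auto simp: adj_rel_def)
  show "(proj a, proj b) \<in> (adj_rel HS (T \<inter> edges HS))\<^sup>*"
  proof (cases "u \<in> ends G e")
    case True
    then obtain p where "p \<in> S" "{a, b} = {u, p}" using u_edges e by metis
    then have "proj a = proj b" by (auto simp: doubleton_eq_iff proj_S)
    then show ?thesis by simp
  next
    case False
    then have "e \<in> T \<inter> edges HS" and "ends HS e = {proj a, proj b}"
      using e assms(1) by (auto simp: HS_simps)
    then show ?thesis by (blast intro: adj_relI)
  qed
qed

lemma rtrancl_adj_rel_lift:
  assumes D: "\<And>p. p \<in> S \<Longrightarrow> \<exists>e \<in> D. ends G e = {u, p}" and "F \<subseteq> edges HS"
    and "(proj x, proj y) \<in> (adj_rel HS F)\<^sup>*"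
  shows "(x, y) \<in> (adj_rel G (F \<union> D))\<^sup>*"
proof (rule rtrancl_lift[of proj, OF _ _ assms(3)])
  have to_u: "(v, u) \<in> (adj_rel G (F \<union> D))\<^sup>*" if "v \<in> insert u S" for v
  proof (cases "v = u")
    case False
    with that have "v \<in> S" by simp
    then obtain e where "e \<in> D" "ends G e = {u, v}" using D by blast
    then have "(v, u) \<in> adj_rel G (F \<union> D)" by (intro adj_relI[of e]) (auto simp: insert_commute)
    then show ?thesis by blast
  qed simp
  fix v w assume "proj v = proj w"
  then have "v = w \<or> v \<in> insert u S \<and> w \<in> insert u S"
    using rep_in_S S_verts by (auto simp: proj_def split: if_splits)
  then show "(v, w) \<in> (adj_rel G (F \<union> D))\<^sup>*"
    using to_u rtrancl_adj_rel_sym by (meson rtrancl.rtrancl_refl rtrancl_trans)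
next
  fix a b assume "(a, b) \<in> adj_rel HS F"
  then obtain e where e: "e \<in> F" "ends HS e = {a, b}" by (auto simp: adj_rel_def)
  then have eHS: "e \<in> edges HS" using assms(2) by blast
  then have "e \<in> edges G" by (simp add: HS_simps)
  then obtain x y where xy: "ends G e = {x, y}" using wf_mgraph_ends(2)[OF wf] by blast
  then have "{proj x, proj y} = {a, b}" using e(2) HS_simps(3)[OF eHS] by simp
  moreover have "(x, y) \<in> adj_rel G (F \<union> D)" "(y, x) \<in> adj_rel G (F \<union> D)"
    using e(1) xy by (auto intro: adj_relI simp: insert_commute)
  ultimately show "\<exists>x y. proj x = a \<and> proj y = b \<and> (x, y) \<in> (adj_rel G (F \<union> D))\<^sup>*"
    by (metis doubleton_eq_iff r_into_rtrancl)
qed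

lemma rtrancl_adj_rel_proj_avoiding:
  assumes "F \<subseteq> edges HS" "(x, y) \<in> (adj_rel G F)\<^sup>*"
  shows "(proj x, proj y) \<in> (adj_rel HS F)\<^sup>*"
proof -
  have "F \<subseteq> edges G" "F \<inter> edges HS = F" using assms(1) by (auto simp: HS_simps)
  moreover have "u \<notin> ends G e" if "e \<in> F" for e using assms(1) that by (auto simp: HS_simps)
  ultimately show ?thesis using rtrancl_adj_rel_proj[of F x y] assms(2) by auto
qed

text \<open>Add the edges of \<open>F\<close> one at a time: a new walk between two vertices of \<open>S\<close> has to cross
  the new edge \<open>e\<close>, and projecting its two halves joins the ends of \<open>e\<close> in \<open>HS\<close> without \<open>e\<close>.\<close>

lemma acyclic_separates_S:
  assumes acyc: "acyclic_edges HS F" and F: "F \<subseteq> edges HS"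
    and "p \<in> S" "q \<in> S" "(p, q) \<in> (adj_rel G F)\<^sup>*"
  shows "p = q"
proof -
  have "finite F" using F wf by (auto simp: HS_simps wf_mgraph_def intro: finite_subset)
  moreover have "\<forall>p \<in> S. \<forall>q \<in> S. (p, q) \<in> (adj_rel G F')\<^sup>* \<longrightarrow> p = q"
    if "finite F'" "F' \<subseteq> F" for F'
    using that
  proof (induction rule: finite_subset_induct')
    case empty
    then show ?case by (simp add: adj_rel_def)
  next
    case (insert e F')
    define R where "R = adj_rel G F'"
    define K where "K = (adj_rel HS (F - {e}))\<^sup>*"
    have "e \<in> edges G" using insert F by (auto simp: HS_simps)
    then obtain x y where xy: "ends G e = {x, y}" using wf_mgraph_ends(2)[OF wf] by blast
    have "(proj x, proj y) \<notin> K"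
      using acyclic_edgesD(2)[OF acyc \<open>e \<in> F\<close>] HS_simps(3)[of e] xy insert F unfolding K_def by auto
    moreover have "(proj a, proj b) \<in> K" if "(a, b) \<in> R\<^sup>*" for a b
    proof -
      have "F' \<subseteq> F - {e}" using insert by blast
      then show ?thesis using rtrancl_adj_rel_proj_avoiding[of F' a b] rtrancl_adj_rel_mono[of F' "F - {e}" HS] F that
        unfolding R_def K_def by blast
    qed
    ultimately have no_cross: "\<not> ((a, x) \<in> R\<^sup>* \<and> (b, y) \<in> R\<^sup>*)" if "a \<in> S" "b \<in> S" for a b
      using that proj_S unfolding K_def by (metis rtrancl_adj_rel_sym rtrancl_trans)
    have "adj_rel G (insert e F') = insert (x, y) (insert (y, x) R)"
      unfolding R_def by (rule adj_rel_insert[OF xy])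
    show ?case
    proof (intro ballI impI)
      fix p q assume "p \<in> S" "q \<in> S" "(p, q) \<in> (adj_rel G (insert e F'))\<^sup>*"
      then have "(p, q) \<in> R\<^sup>* \<or> (\<exists>a \<in> S. \<exists>b \<in> S. (a, x) \<in> R\<^sup>* \<and> (b, y) \<in> R\<^sup>*)"
        unfolding \<open>adj_rel G (insert e F') = _\<close> rtrancl_insert R_def
        by (auto dest: rtrancl_adj_rel_sym intro: rtrancl_trans)
      then show "p = q" using insert.IH \<open>p \<in> S\<close> \<open>q \<in> S\<close> no_cross unfolding R_def by blast
    qed
  qed
  ultimately show ?thesis using assms(3-5) by blast
qed

lemma spanning_tree_u_edge:
  assumes T: "spanning_tree G T" and nb: "tree_neighbours G u T = S" and e: "e \<in> T" "u \<in> ends G e"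
  shows "\<exists>p \<in> S. ends G e = {u, p}"
proof -
  obtain x y where xy: "x \<noteq> y" "ends G e = {x, y}"
    using T e(1) unfolding spanning_tree_def acyclic_edges_def by blast
  define p where "p = (if x = u then y else x)"
  have ep: "ends G e = {u, p}" "p \<noteq> u" using xy e(2) unfolding p_def by auto
  then have "p \<in> neighbours G u" using T e(1) unfolding neighbours_def spanning_tree_def by auto
  then have "p \<in> S" using nb ep e(1) unfolding tree_neighbours_def by auto
  with ep show ?thesis by blast
qed

lemma spanning_tree_restrict:
  assumes T: "spanning_tree G T" and nb: "tree_neighbours G u T = S"
  shows "spanning_tree HS (T \<inter> edges HS)"
proof -
  have TG: "T \<subseteq> edges G" and conn: "connected_on G (verts G) T" and acyc: "acyclic_edges G T"
    using T unfolding spanning_tree_def by auto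
  note proj_walk = rtrancl_adj_rel_proj[OF _ spanning_tree_u_edge[OF T nb]]
  have "connected_on HS (verts HS) (T \<inter> edges HS)"
    unfolding connected_on_def
  proof (intro conjI ballI)
    show "verts HS \<noteq> {}" using proj_verts u_vert by blast
    fix a b assume "a \<in> verts HS" "b \<in> verts HS"
    then obtain x y where "x \<in> verts G" "y \<in> verts G" "a = proj x" "b = proj y" by (auto simp: HS_simps)
    moreover have "(x, y) \<in> (adj_rel G T)\<^sup>*" using conn \<open>x \<in> verts G\<close> \<open>y \<in> verts G\<close>
      unfolding connected_on_def by blast
    ultimately show "(a, b) \<in> (adj_rel HS (T \<inter> edges HS))\<^sup>*" using proj_walk[OF TG] by simp
  qed
  moreover have "acyclic_edges HS (T \<inter> edges HS)"
    unfolding acyclic_edges_def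
  proof
    fix e assume e: "e \<in> T \<inter> edges HS"
    obtain x y where xy: "ends G e = {x, y}" "(x, y) \<notin> (adj_rel G (T - {e}))\<^sup>*"
      using acyc e unfolding acyclic_edges_def by blast
    define D where "D = {e' \<in> T. u \<in> ends G e'}"
    have D: "\<exists>e' \<in> D. ends G e' = {u, p}" if "p \<in> S" for p
      using nb that unfolding tree_neighbours_def D_def by auto
    have "(proj x, proj y) \<notin> (adj_rel HS (T \<inter> edges HS - {e}))\<^sup>*"
    proof
      assume "(proj x, proj y) \<in> (adj_rel HS (T \<inter> edges HS - {e}))\<^sup>*"
      then have "(x, y) \<in> (adj_rel G (T \<inter> edges HS - {e} \<union> D))\<^sup>*"
        using rtrancl_adj_rel_lift[of D "T \<inter> edges HS - {e}" x y] D by blast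
      moreover have "T \<inter> edges HS - {e} \<union> D \<subseteq> T - {e}" using e by (auto simp: D_def HS_simps)
      ultimately show False using xy(2) rtrancl_adj_rel_mono by blast
    qed
    moreover have "ends HS e = {proj x, proj y}" using e xy(1) HS_simps(3)[of e] by simp
    ultimately show "\<exists>a b. a \<noteq> b \<and> ends HS e = {a, b} \<and>
        (a, b) \<notin> (adj_rel HS (T \<inter> edges HS - {e}))\<^sup>*"
      by (intro exI[of _ "proj x"] exI[of _ "proj y"]) auto
  qed
  ultimately show ?thesis unfolding spanning_tree_def by blast
qed

definition edge_choices :: "('a \<Rightarrow> 'e) set" where
  "edge_choices = (\<Pi>\<^sub>E p \<in> S. {e \<in> edges G. ends G e = {u, p}})"

lemma edge_choicesD:
  "g \<in> edge_choices \<Longrightarrow> p \<in> S \<Longrightarrow> g p \<in> edges G \<and> ends G (g p) = {u, p}"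
  unfolding edge_choices_def by auto

lemma edge_choice_notin_HS: "g \<in> edge_choices \<Longrightarrow> p \<in> S \<Longrightarrow> g p \<notin> edges HS"
  by (simp add: HS_simps edge_choicesD)

lemma tree_neighbours_extend:
  assumes g: "g \<in> edge_choices" and F: "F \<subseteq> edges HS"
  shows "tree_neighbours G u (g ` S \<union> F) = S"
proof
  show "S \<subseteq> tree_neighbours G u (g ` S \<union> F)"
    using S_neighbours edge_choicesD[OF g] unfolding tree_neighbours_def by blast
  show "tree_neighbours G u (g ` S \<union> F) \<subseteq> S"
  proof
    fix p assume "p \<in> tree_neighbours G u (g ` S \<union> F)"
    then obtain e where p: "p \<noteq> u" "e \<in> g ` S \<union> F" "ends G e = {u, p}"
      unfolding tree_neighbours_def neighbours_def by blast
    have "e \<notin> F" using F p(3) by (auto simp: HS_simps)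
    then obtain q where "q \<in> S" "e = g q" using p(2) by blast
    with p u_notin_S edge_choicesD[OF g] show "p \<in> S" by (auto simp: doubleton_eq_iff)
  qed
qed

lemma connected_on_extend:
  assumes g: "g \<in> edge_choices" and F: "F \<subseteq> edges HS" "connected_on HS (verts HS) F"
  shows "connected_on G (verts G) (g ` S \<union> F)"
  unfolding connected_on_def
proof (intro conjI ballI)
  show "verts G \<noteq> {}" using u_vert by blast
  fix x y assume "x \<in> verts G" "y \<in> verts G"
  then have "(proj x, proj y) \<in> (adj_rel HS F)\<^sup>*"
    using F(2) proj_verts unfolding connected_on_def by blast
  moreover have "\<exists>e \<in> g ` S. ends G e = {u, p}" if "p \<in> S" for p
    using that edge_choicesD[OF g] by blast
  ultimately have "(x, y) \<in> (adj_rel G (F \<union> g ` S))\<^sup>*"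
    using rtrancl_adj_rel_lift[of "g ` S" F x y] F(1) by blast
  then show "(x, y) \<in> (adj_rel G (g ` S \<union> F))\<^sup>*" by (simp add: Un_commute)
qed

lemma forest_edge_bridge_extend:
  assumes g: "g \<in> edge_choices" and F: "F \<subseteq> edges HS" "acyclic_edges HS F" and e: "e \<in> F"
  shows "\<exists>x y. x \<noteq> y \<and> ends G e = {x, y} \<and> (x, y) \<notin> (adj_rel G (g ` S \<union> F - {e}))\<^sup>*"
proof -
  have eHS: "e \<in> edges HS" using F(1) e by blast
  then have "e \<in> edges G" by (simp add: HS_simps)
  then obtain x y where xy: "ends G e = {x, y}" using wf_mgraph_ends(2)[OF wf] by blast
  have "ends HS e = {proj x, proj y}" using HS_simps(3)[OF eHS] xy by simp
  note no_walk = acyclic_edgesD[OF F(2) e this]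
  have "(x, y) \<notin> (adj_rel G (g ` S \<union> F - {e}))\<^sup>*"
  proof
    let ?T = "g ` S \<union> F - {e}"
    assume "(x, y) \<in> (adj_rel G ?T)\<^sup>*"
    moreover have "?T \<subseteq> edges G" using F(1) edge_choicesD[OF g] by (auto simp: HS_simps)
    moreover have "\<exists>p \<in> S. ends G e' = {u, p}" if "e' \<in> ?T" "u \<in> ends G e'" for e'
      using that F(1) edge_choicesD[OF g] by (auto simp: HS_simps)
    ultimately have "(proj x, proj y) \<in> (adj_rel HS (?T \<inter> edges HS))\<^sup>*"
      by (rule rtrancl_adj_rel_proj[rotated -1])
    moreover have "?T \<inter> edges HS \<subseteq> F - {e}" using edge_choice_notin_HS[OF g] by blast
    ultimately show False using no_walk(2) rtrancl_adj_rel_mono by blast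
  qed
  moreover have "x \<noteq> y" using no_walk(1) by auto
  ultimately show ?thesis using xy by blast
qed

lemma choice_edge_bridge_extend:
  assumes g: "g \<in> edge_choices" and F: "F \<subseteq> edges HS" "acyclic_edges HS F" and p: "p \<in> S"
  shows "(p, u) \<notin> (adj_rel G (g ` S \<union> F - {g p}))\<^sup>*"
proof
  define C where "C = {z. (p, z) \<in> (adj_rel G F)\<^sup>*}"
  have "u \<notin> C"
  proof
    assume "u \<in> C"
    moreover have "p \<noteq> u" using p u_notin_S by blast
    ultimately obtain z where "(z, u) \<in> adj_rel G F" unfolding C_def by (auto elim: rtranclE)
    then show False using F(1) by (auto simp: adj_rel_def HS_simps)
  qed
  assume "(p, u) \<in> (adj_rel G (g ` S \<union> F - {g p}))\<^sup>*"
  then have "u \<in> C"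
  proof induction
    case base
    then show ?case by (simp add: C_def)
  next
    case (step z1 z2)
    then obtain e where e: "e \<in> g ` S \<union> F" "e \<noteq> g p" "ends G e = {z1, z2}"
      by (auto simp: adj_rel_def)
    show ?case
    proof (cases "e \<in> F")
      case True
      then show ?thesis using step.IH e(3) by (auto simp: C_def intro: rtrancl_into_rtrancl adj_relI)
    next
      case False
      then obtain q where q: "q \<in> S" "e = g q" "q \<noteq> p" using e(1,2) by blast
      then have "{z1, z2} = {u, q}" using e(3) edge_choicesD[OF g] by simp
      moreover have "z1 \<noteq> u" using step.IH \<open>u \<notin> C\<close> by blast
      ultimately have "(p, q) \<in> (adj_rel G F)\<^sup>*" using step.IH by (auto simp: C_def doubleton_eq_iff)
      then show ?thesis using acyclic_separates_S[OF F(2,1) p q(1)] q(3) by blast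
    qed
  qed
  with \<open>u \<notin> C\<close> show False by blast
qed

lemma acyclic_edges_extend:
  assumes g: "g \<in> edge_choices" and F: "F \<subseteq> edges HS" "acyclic_edges HS F"
  shows "acyclic_edges G (g ` S \<union> F)"
  unfolding acyclic_edges_def
proof
  fix e assume "e \<in> g ` S \<union> F"
  then consider "e \<in> F" | p where "p \<in> S" "e = g p" by blast
  then show "\<exists>x y. x \<noteq> y \<and> ends G e = {x, y} \<and> (x, y) \<notin> (adj_rel G (g ` S \<union> F - {e}))\<^sup>*"
  proof cases
    case 1
    then show ?thesis by (rule forest_edge_bridge_extend[OF g F])
  next
    case 2
    then show ?thesis using choice_edge_bridge_extend[OF g F 2(1)] edge_choicesD[OF g 2(1)] u_notin_S
      by (metis rtrancl_adj_rel_sym)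
  qed
qed

lemma spanning_tree_extend:
  assumes "g \<in> edge_choices" and "spanning_tree HS F"
  shows "spanning_tree G (g ` S \<union> F)"
  using assms connected_on_extend acyclic_edges_extend edge_choicesD
  unfolding spanning_tree_def by (auto simp: HS_simps)

lemma spanning_tree_decompose:
  assumes T: "spanning_tree G T" and nb: "tree_neighbours G u T = S"
  obtains g where "g \<in> edge_choices" "T = g ` S \<union> (T \<inter> edges HS)"
proof
  let ?e = "\<lambda>p. SOME e. e \<in> T \<and> ends G e = {u, p}"
  define g where "g = restrict ?e S"
  have g_in_T: "g p \<in> T \<and> ends G (g p) = {u, p}" if "p \<in> S" for p
  proof -
    have "\<exists>e. e \<in> T \<and> ends G e = {u, p}" using that nb unfolding tree_neighbours_def by auto
    then have "?e p \<in> T \<and> ends G (?e p) = {u, p}" by (rule someI_ex)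
    then show ?thesis using that by (simp add: g_def)
  qed
  have TG: "T \<subseteq> edges G" and acyc: "acyclic_edges G T" using T unfolding spanning_tree_def by auto
  have "g \<in> extensional S" by (simp add: g_def)
  then show "g \<in> edge_choices" using g_in_T TG unfolding edge_choices_def PiE_iff by blast
  have "T \<subseteq> g ` S \<union> (T \<inter> edges HS)"
  proof
    fix e assume e: "e \<in> T"
    show "e \<in> g ` S \<union> (T \<inter> edges HS)"
    proof (cases "u \<in> ends G e")
      case True
      then obtain p where p: "p \<in> S" "ends G e = {u, p}" using spanning_tree_u_edge[OF T nb e] by blast
      then have "ends G e = ends G (g p)" "g p \<in> T" using g_in_T by auto
      then have "e = g p" using inj_onD[OF acyclic_edges_inj_on[OF acyc]] e by blast
      then show ?thesis using p(1) by blast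
    next
      case False
      then show ?thesis using e TG by (simp add: HS_simps subset_iff)
    qed
  qed
  then show "T = g ` S \<union> (T \<inter> edges HS)" using g_in_T by blast
qed

lemma inj_on_extend: "inj_on (\<lambda>(g, F). g ` S \<union> F) (edge_choices \<times> Pow (edges HS))"
proof (rule inj_onI)
  fix x y assume "x \<in> edge_choices \<times> Pow (edges HS)" "y \<in> edge_choices \<times> Pow (edges HS)"
    and "(\<lambda>(g, F). g ` S \<union> F) x = (\<lambda>(g, F). g ` S \<union> F) y"
  then obtain g1 F1 g2 F2 where xy: "x = (g1, F1)" "y = (g2, F2)"
    and g: "g1 \<in> edge_choices" "g2 \<in> edge_choices" and F: "F1 \<subseteq> edges HS" "F2 \<subseteq> edges HS"
    and eq: "g1 ` S \<union> F1 = g2 ` S \<union> F2" by auto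
  have "F1 = (g1 ` S \<union> F1) \<inter> edges HS" "F2 = (g2 ` S \<union> F2) \<inter> edges HS"
    using F edge_choice_notin_HS g by auto
  then have "F1 = F2" using eq by simp
  moreover have "g1 = g2"
  proof (rule PiE_ext[OF g[unfolded edge_choices_def]])
    fix p assume p: "p \<in> S"
    have "g1 p \<notin> F2" using F(2) edge_choice_notin_HS[OF g(1) p] by blast
    then obtain q where q: "q \<in> S" "g1 p = g2 q" using eq p by blast
    then have "p = q" using edge_choicesD[OF g(1) p] edge_choicesD[OF g(2) q(1)] p u_notin_S
      by (auto simp: doubleton_eq_iff)
    then show "g1 p = g2 p" using q by simp
  qed
  ultimately show "x = y" using xy by simp
qed

lemma card_spanning_trees_with_tree_neighbours:
  "card {T. spanning_tree G T \<and> tree_neighbours G u T = S} = (\<Prod>p \<in> S. mult G u p) * num_spanning_trees HS"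
proof -
  let ?extend = "\<lambda>(g, F). g ` S \<union> F"
  let ?pairs = "edge_choices \<times> {F. spanning_tree HS F}"
  have "{T. spanning_tree G T \<and> tree_neighbours G u T = S} = ?extend ` ?pairs"
  proof (intro equalityI subsetI)
    fix T assume "T \<in> {T. spanning_tree G T \<and> tree_neighbours G u T = S}"
    then have T: "spanning_tree G T" "tree_neighbours G u T = S" by auto
    obtain g where "g \<in> edge_choices" "T = g ` S \<union> (T \<inter> edges HS)" using spanning_tree_decompose[OF T] .
    moreover have "spanning_tree HS (T \<inter> edges HS)" using spanning_tree_restrict[OF T] .
    ultimately show "T \<in> ?extend ` ?pairs" by (intro image_eqI[of _ _ "(g, T \<inter> edges HS)"]) auto
  next
    fix T assume "T \<in> ?extend ` ?pairs"
    then obtain g F where "g \<in> edge_choices" "spanning_tree HS F" "T = g ` S \<union> F" by auto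
    moreover have "F \<subseteq> edges HS" using \<open>spanning_tree HS F\<close> by (simp add: spanning_tree_def)
    ultimately show "T \<in> {T. spanning_tree G T \<and> tree_neighbours G u T = S}"
      using spanning_tree_extend tree_neighbours_extend by simp
  qed
  moreover have "inj_on ?extend ?pairs"
    by (rule inj_on_subset[OF inj_on_extend]) (auto simp: spanning_tree_def)
  moreover have "finite S" using S_verts wf unfolding wf_mgraph_def by (auto intro: finite_subset)
  then have "card edge_choices = (\<Prod>p \<in> S. mult G u p)"
    unfolding edge_choices_def mult_def by (rule card_PiE)
  ultimately show ?thesis
    unfolding num_spanning_trees_def by (simp only: card_image card_cartesian_product)
qed

end

lemma tree_neighbours_nonempty:
  assumes wf: "wf_mgraph G" and u: "u \<in> verts G" and N: "neighbours G u \<noteq> {}"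
    and T: "spanning_tree G T"
  shows "tree_neighbours G u T \<noteq> {}"
proof -
  have TG: "T \<subseteq> edges G" and conn: "connected_on G (verts G) T" and acyc: "acyclic_edges G T"
    using T by (simp_all add: spanning_tree_def)
  obtain p e where "p \<noteq> u" "e \<in> edges G" "ends G e = {u, p}" using N unfolding neighbours_def by blast
  then have "p \<in> verts G" using wf_mgraph_ends(1)[OF wf] by blast
  then have "(u, p) \<in> (adj_rel G T)\<^sup>*" using conn u unfolding connected_on_def by blast
  with \<open>p \<noteq> u\<close> obtain z where "(u, z) \<in> adj_rel G T" by (metis converse_rtranclE)
  then obtain e' where e': "e' \<in> T" "ends G e' = {u, z}" unfolding adj_rel_def by blast
  then have "z \<noteq> u" using acyclic_edgesD(1)[OF acyc] by blast
  with e' TG have "z \<in> tree_neighbours G u T" unfolding tree_neighbours_def neighbours_def by blast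
  then show ?thesis by blast
qed

lemma num_spanning_trees_by_tree_neighbours:
  assumes wf: "wf_mgraph G" and u: "u \<in> verts G" and N: "neighbours G u \<noteq> {}"
  shows "num_spanning_trees G =
    (\<Sum>S \<in> {S. S \<subseteq> neighbours G u \<and> S \<noteq> {}}.
       (\<Prod>p \<in> S. mult G u p) * num_spanning_trees (identify (delete_vertex G u) S))"
proof -
  let ?P = "{S. S \<subseteq> neighbours G u \<and> S \<noteq> {}}"
  let ?cls = "\<lambda>S. {T. spanning_tree G T \<and> tree_neighbours G u T = S}"
  have "neighbours G u \<subseteq> verts G" using wf_mgraph_ends(1)[OF wf] unfolding neighbours_def by blast
  then have "finite (neighbours G u)" using wf unfolding wf_mgraph_def by (blast intro: finite_subset)
  then have fin_P: "finite ?P" by (rule finite_subset[rotated, OF finite_Pow_iff[THEN iffD2]]) blast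
  have fin_cls: "finite (?cls S)" for S
    using wf unfolding wf_mgraph_def spanning_tree_def
    by (blast intro: finite_subset[rotated, OF finite_Pow_iff[THEN iffD2]])
  have "tree_neighbours G u T \<subseteq> neighbours G u" for T
    unfolding tree_neighbours_def by blast
  then have "{T. spanning_tree G T} = (\<Union>S \<in> ?P. ?cls S)"
    using tree_neighbours_nonempty[OF wf u N] by auto
  then have "num_spanning_trees G = card (\<Union>S \<in> ?P. ?cls S)"
    by (simp add: num_spanning_trees_def)
  also have "\<dots> = (\<Sum>S \<in> ?P. card (?cls S))"
    using fin_P fin_cls by (intro card_UN_disjoint) blast+
  also have "\<dots> = (\<Sum>S \<in> ?P. (\<Prod>p \<in> S. mult G u p) * num_spanning_trees (identify (delete_vertex G u) S))"
  proof (rule sum.cong[OF refl])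
    fix S assume "S \<in> ?P"
    then interpret neighbour_identification G u S by unfold_locales (use wf u in simp_all)
    show "card (?cls S) = (\<Prod>p \<in> S. mult G u p) * num_spanning_trees HS"
      by (rule card_spanning_trees_with_tree_neighbours)
  qed
  finally show ?thesis .
qed

lemma sum_nonempty_subsets_split:
  assumes "finite N"
  shows "(\<Sum>S \<in> {S. S \<subseteq> N \<and> S \<noteq> {}}. f S) =
    (\<Sum>p \<in> N. f {p}) + (\<Sum>S \<in> {S. S \<subseteq> N \<and> 2 \<le> card S}. f S)"
proof -
  have "{S. S \<subseteq> N \<and> S \<noteq> {}} = (\<lambda>p. {p}) ` N \<union> {S. S \<subseteq> N \<and> 2 \<le> card S}"
  proof (intro equalityI subsetI)
    fix S assume S: "S \<in> {S. S \<subseteq> N \<and> S \<noteq> {}}"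
    then have "card S \<noteq> 0" using assms by (auto dest: finite_subset)
    then consider "card S = 1" | "2 \<le> card S" by linarith
    then show "S \<in> (\<lambda>p. {p}) ` N \<union> {S. S \<subseteq> N \<and> 2 \<le> card S}"
      by cases (use S in \<open>auto simp: card_1_singleton_iff\<close>)
  qed auto
  moreover have "(\<lambda>p. {p}) ` N \<inter> {S. S \<subseteq> N \<and> 2 \<le> card S} = {}" by auto
  ultimately show ?thesis
    using assms by (simp add: sum.union_disjoint sum.reindex)
qed

lemma identify_singleton: "identify H {p} = H"
proof -
  have collapse_id: "(\<lambda>v. if v \<in> {p} then SOME x. x \<in> {p} else v) = id" by auto
  show ?thesis unfolding identify_def Let_def collapse_id image_id by simp
qed

theorem theorem5p8:
  fixes G :: "('a, 'e) mgraph" and u :: 'a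
  assumes "wf_mgraph G"
    and "connected G"
    and "u \<in> verts G"
    and "card (neighbours G u) \<ge> 2"
    and "\<not> cut_vertex G u"
  shows "num_spanning_trees G =
     (\<Sum>p \<in> neighbours G u. mult G u p) * num_spanning_trees (delete_vertex G u)
     + (\<Sum>S \<in> {S. S \<subseteq> neighbours G u \<and> card S \<ge> 2}.
          (\<Prod>p \<in> S. mult G u p) * num_spanning_trees (identify (delete_vertex G u) S))"
proof -
  have "finite (neighbours G u)" "neighbours G u \<noteq> {}"
    using assms(4) by (auto intro: card_ge_0_finite)
  then show ?thesis
    using num_spanning_trees_by_tree_neighbours[OF assms(1,3)]
    by (simp add: sum_nonempty_subsets_split identify_singleton sum_distrib_right)
qed

end
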